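(* Let $(V,P)$ be a finite, irreducible, reversible Markov chain with reversible probability measure $m$ (so $m(V)=1$). Then \[ \tfrac14\,\alpha_{\operatorname{cap}}^\theta \;\le\; \alpha_{\operatorname{spectral}} \;\le\; 2\,\alpha_{\operatorname{cap}}^\theta . \]
   Context: $V$ is a finite set, $P:V\times V\to[0,\infty)$ has symmetric support ($P(x,y)>0\iff P(y,x)>0$), the chain is connected, and $m$ is a probability measure on $V$ with $m(x)P(x,y)=m(y)P(y,x)$ for all $x,y$. The Laplacian is $\Delta f(x)=\sum_y P(x,y)(f(y)-f(x))$, the inner product is $\langle f,g\rangle=\sum_x f(x)g(x)m(x)$, $\|f\|_2=\langle f,f\rangle^{1/2}$, and the Dirichlet form is $\mathcal E(f,g)=-\langle \Delta f,g\rangle$, $\mathcal E(f)=\mathcal E(f,f)$. For disjoint nonempty $A,B\subset V$, $\operatorname{cap}(A,B)=\min\{\mathcal E(f): f|_A=0,\ f|_B=1\}$. The logarithmic mean is $\theta(s,t)=(s-t)/(\log s-\log t)$ for $s\ne t$ and $\theta(s,s)=s$. Define $\alpha_{\operatorname{cap}}^\theta=\inf_{A,B}\theta\big(\operatorname{cap}(A,B)/m(A),\operatorname{cap}(A,B)/m(B)\big)$ over disjoint nonempty $A,B\subset V$. For nonempty $X\subsetneq V$, $\lambda_X=\inf\{\mathcal E(f,f):\|f\|_2=1,\ f|_{V\setminus X}=0\}$, and $\alpha_{\operatorname{spectral}}=\inf_{X}\theta(\lambda_X,\lambda_{V\setminus X})$ over nonempty proper subsets $X\subset V$. *)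

theory Defs
  imports Complex_Main
begin

text \<open>Functions on V are represented as 'a => real;
  all sums range over V, so values outside V are irrelevant.\<close>

definition laplacian :: "'a set \<Rightarrow> ('a \<Rightarrow> 'a \<Rightarrow> real) \<Rightarrow> ('a \<Rightarrow> real) \<Rightarrow> 'a \<Rightarrow> real" where
  "laplacian V P f x = (\<Sum>y\<in>V. P x y * (f y - f x))"

definition inner_m :: "'a set \<Rightarrow> ('a \<Rightarrow> real) \<Rightarrow> ('a \<Rightarrow> real) \<Rightarrow> ('a \<Rightarrow> real) \<Rightarrow> real" where
  "inner_m V m f g = (\<Sum>x\<in>V. f x * g x * m x)"

definition norm2_m :: "'a set \<Rightarrow> ('a \<Rightarrow> real) \<Rightarrow> ('a \<Rightarrow> real) \<Rightarrow> real" where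
  "norm2_m V m f = sqrt (inner_m V m f f)"

definition dirichlet :: "'a set \<Rightarrow> ('a \<Rightarrow> 'a \<Rightarrow> real) \<Rightarrow> ('a \<Rightarrow> real) \<Rightarrow> ('a \<Rightarrow> real) \<Rightarrow> ('a \<Rightarrow> real) \<Rightarrow> real" where
  "dirichlet V P m f g = - inner_m V m (laplacian V P f) g"

definition capacity :: "'a set \<Rightarrow> ('a \<Rightarrow> 'a \<Rightarrow> real) \<Rightarrow> ('a \<Rightarrow> real) \<Rightarrow> 'a set \<Rightarrow> 'a set \<Rightarrow> real" where
  "capacity V P m A B =
     Inf {dirichlet V P m f f | f. (\<forall>x\<in>A. f x = 0) \<and> (\<forall>x\<in>B. f x = 1)}"

definition logmean :: "real \<Rightarrow> real \<Rightarrow> real" where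
  "logmean s t = (if s = t then s else (s - t) / (ln s - ln t))"

definition alpha_cap :: "'a set \<Rightarrow> ('a \<Rightarrow> 'a \<Rightarrow> real) \<Rightarrow> ('a \<Rightarrow> real) \<Rightarrow> real" where
  "alpha_cap V P m = Inf {logmean (capacity V P m A B / sum m A) (capacity V P m A B / sum m B)
       | A B. A \<subseteq> V \<and> B \<subseteq> V \<and> A \<noteq> {} \<and> B \<noteq> {} \<and> A \<inter> B = {}}"

definition lambda_D :: "'a set \<Rightarrow> ('a \<Rightarrow> 'a \<Rightarrow> real) \<Rightarrow> ('a \<Rightarrow> real) \<Rightarrow> 'a set \<Rightarrow> real" where
  "lambda_D V P m X = Inf {dirichlet V P m f f | f. norm2_m V m f = 1 \<and> (\<forall>x\<in>V - X. f x = 0)}"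

definition alpha_spectral :: "'a set \<Rightarrow> ('a \<Rightarrow> 'a \<Rightarrow> real) \<Rightarrow> ('a \<Rightarrow> real) \<Rightarrow> real" where
  "alpha_spectral V P m = Inf {logmean (lambda_D V P m X) (lambda_D V P m (V - X))
       | X. X \<subseteq> V \<and> X \<noteq> {} \<and> X \<noteq> V}"

end

theory Submission
  imports Defs "HOL-Analysis.Convex" "HOL-Analysis.Function_Topology"
begin

text \<open>
  Upper bound: cut the equilibrium potential \<open>h\<close> of \<open>(A, B)\<close> at height \<open>1/2\<close>. The positive
  parts of \<open>h - 1/2\<close> and \<open>1/2 - h\<close> are supported on complementary sets, have energy at most
  \<open>cap(A, B)/2\<close> (since \<open>h\<close> is orthogonal to all functions vanishing on \<open>A \<union> B\<close>) and squared
  norms at least \<open>m(B)/4\<close> and \<open>m(A)/4\<close>; so the two Dirichlet eigenvalues are at most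
  \<open>2 cap(A, B)/m(B)\<close> and \<open>2 cap(A, B)/m(A)\<close>.

  Lower bound: a discrete Maz'ya capacitary inequality gives \<open>\<lambda>(X) \<ge> \<kappa>(X)/4\<close>, where \<open>\<kappa>(X)\<close>
  is the least ratio \<open>cap(V - X, F)/m(F)\<close> over nonempty \<open>F \<subseteq> X\<close>. If \<open>B \<subseteq> X\<close> and
  \<open>A \<subseteq> V - X\<close> realise \<open>\<kappa>(X)\<close> and \<open>\<kappa>(V - X)\<close>, monotonicity of the capacity gives
  \<open>cap(A, B)/m(B) \<le> 4 \<lambda>(X)\<close> and \<open>cap(A, B)/m(A) \<le> 4 \<lambda>(V - X)\<close>.

  In both directions the logarithmic mean, being monotone and positively homogeneous,
  transfers the bounds.
\<close>

section \<open>Logarithmic mean\<close>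

text \<open>For positive arguments \<open>logmean s t = 1 / ln_slope s t\<close>, so monotonicity of the
  logarithmic mean reduces to concavity of \<open>ln\<close>.\<close>
definition ln_slope :: "real \<Rightarrow> real \<Rightarrow> real" where
  "ln_slope s t = (if s = t then 1 / s else (ln s - ln t) / (s - t))"

lemma ln_slope_commute: "ln_slope s t = ln_slope t s"
  unfolding ln_slope_def by (metis minus_diff_eq minus_divide_divide)

lemma ln_slope_pos: "0 < s \<Longrightarrow> 0 < t \<Longrightarrow> 0 < ln_slope s t"
  by (cases s t rule: linorder_cases) (auto simp: ln_slope_def zero_less_divide_iff)

lemma ln_slope_tangent_bounds:
  assumes "0 < x" "x < z"
  shows "1 / z \<le> ln_slope x z" "ln_slope x z \<le> 1 / x"
proof -
  have slope: "ln_slope x z = (ln z - ln x) / (z - x)"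
    using assms by (simp add: ln_slope_def) (metis minus_diff_eq minus_divide_divide)
  have "ln z - ln x \<le> (z - x) / x" "ln x - ln z \<le> (x - z) / z"
    using assms by (intro ln_diff_le; simp)+
  then show "1 / z \<le> ln_slope x z" "ln_slope x z \<le> 1 / x"
    unfolding slope using assms by (simp_all add: field_simps)
qed

lemma ln_slope_three_points:
  assumes "0 < x" "x \<le> y" "y \<le> z" "x < z"
  shows "ln_slope x z \<le> ln_slope x y \<and> ln_slope y z \<le> ln_slope x z"
proof -
  consider "y = x" | "y = z" | "x < y" "y < z"
    using assms by linarith
  then show ?thesis
  proof cases
    case 1
    then show ?thesis using ln_slope_tangent_bounds[OF assms(1,4)] by (simp add: ln_slope_def)
  next
    case 2
    then show ?thesis using ln_slope_tangent_bounds[OF assms(1,4)] by (simp add: ln_slope_def)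
  next
    case 3
    have cvx: "convex_on {0<..} (\<lambda>x. - ln x)"
      using ln_concave by (simp add: concave_on_def)
    have neg: "(- ln u - - ln v) / (u - v) = - ((ln u - ln v) / (u - v))" for u v :: real
      by (simp add: minus_divide_left)
    have "x \<in> {0<..}" "z \<in> {0<..}"
      using assms by auto
    note slopes = convex_on_slope_le[OF cvx this 3, unfolded neg]
    show ?thesis
      using slopes 3 assms by (simp add: ln_slope_def)
  qed
qed

lemma ln_slope_antimono:
  assumes "0 < a" "a \<le> a'" "0 < b"
  shows "ln_slope a' b \<le> ln_slope a b"
proof (cases "a = a'")
  case False
  with assms have "a < a'"
    by simp
  consider "b \<le> a" | "a \<le> b" "b \<le> a'" | "a' \<le> b"
    by linarith
  then show ?thesis
  proof cases
    case 1
    with ln_slope_three_points[of b a a'] assms \<open>a < a'\<close> show ?thesis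
      by (simp add: ln_slope_commute[of _ b])
  next
    case 2
    with ln_slope_three_points[of a b a'] assms \<open>a < a'\<close> show ?thesis
      by (simp add: ln_slope_commute[of a'])
  next
    case 3
    with ln_slope_three_points[of a a' b] assms \<open>a < a'\<close> show ?thesis
      by simp
  qed
qed simp

lemma logmean_eq_inverse_ln_slope: "0 < s \<Longrightarrow> 0 < t \<Longrightarrow> logmean s t = 1 / ln_slope s t"
  unfolding logmean_def ln_slope_def by auto

lemma logmean_commute: "logmean s t = logmean t s"
  unfolding logmean_def by (metis minus_diff_eq minus_divide_divide)

lemma logmean_mult: "0 < k \<Longrightarrow> 0 < s \<Longrightarrow> 0 < t \<Longrightarrow> logmean (k * s) (k * t) = k * logmean s t"
  by (simp add: logmean_def ln_mult flip: right_diff_distrib)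

lemma logmean_mono:
  assumes "0 < s" "s \<le> s'" "0 < t" "t \<le> t'"
  shows "logmean s t \<le> logmean s' t'"
proof -
  have "ln_slope s' t' \<le> ln_slope s' t"
    using ln_slope_antimono[of t t' s'] assms by (simp add: ln_slope_commute)
  also have "\<dots> \<le> ln_slope s t"
    using ln_slope_antimono[of s s' t] assms by simp
  finally show ?thesis
    using assms ln_slope_pos[of s' t'] by (simp add: logmean_eq_inverse_ln_slope frac_le)
qed

section \<open>Layer-cake levels\<close>

lemma parabola_mult_step:
  fixes r s :: real
  assumes "1 \<le> s"
  shows "(r * s - 1) * (3 - r * s) \<le> (r - 1) * (3 - r) + (s - 1 / s)"
proof -
  have "s * ((r - 1) * (3 - r) + (s - 1 / s) - (r * s - 1) * (3 - r * s))
      = (s - 1) * ((r * s - 1)\<^sup>2 + s * (r - 1)\<^sup>2)"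
    using assms by (simp add: field_simps power2_eq_square)
  also have "0 \<le> \<dots>"
    using assms by simp
  finally show ?thesis
    using assms by (simp add: zero_le_mult_iff)
qed

text \<open>The levels \<open>0 = t 0 < \<dots> < t n\<close> are the values of a nonnegative function \<open>a\<close>.
  \<open>test j \<circ> a\<close> is admissible for the capacity of the superlevel set \<open>{t (Suc j) \<le> a}\<close>, and
  \<open>test_edge\<close> is the pointwise inequality behind Maz'ya's capacitary inequality.\<close>
locale levels =
  fixes t :: "nat \<Rightarrow> real" and n :: nat
  assumes levels_less: "\<And>i j. i < j \<Longrightarrow> j \<le> n \<Longrightarrow> t i < t j"
    and levels_0: "t 0 = 0"
begin

definition weight :: "nat \<Rightarrow> real" where
  "weight j = (t (Suc j))\<^sup>2 - (t j)\<^sup>2"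

definition test :: "nat \<Rightarrow> real \<Rightarrow> real" where
  "test j v = (if t (Suc j) \<le> v then 1 else v\<^sup>2 / (t (Suc j) * t j))"

lemma levels_le_iff: "i \<le> n \<Longrightarrow> j \<le> n \<Longrightarrow> t i \<le> t j \<longleftrightarrow> i \<le> j"
  by (metis levels_less linorder_not_le order_le_less)

lemma levels_pos: "0 < j \<Longrightarrow> j \<le> n \<Longrightarrow> 0 < t j"
  using levels_less[of 0 j] levels_0 by simp

lemma weight_nonneg: "j < n \<Longrightarrow> 0 \<le> weight j"
  unfolding weight_def using levels_less[of j "Suc j"] levels_le_iff[of 0 j] levels_0
  by (simp add: power_mono)

lemma sum_weight: "p \<le> q \<Longrightarrow> (\<Sum>j=p..<q. weight j) = (t q)\<^sup>2 - (t p)\<^sup>2"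
  unfolding weight_def by (rule sum_Suc_diff')

lemma sq_eq_sum_weight:
  assumes "p \<le> n"
  shows "(t p)\<^sup>2 = (\<Sum>j<n. if t (Suc j) \<le> t p then weight j else 0)"
proof -
  have "(\<Sum>j<n. if t (Suc j) \<le> t p then weight j else 0) = (\<Sum>j<n. if j < p then weight j else 0)"
    using levels_le_iff[of "Suc _" p] assms by (intro sum.cong) auto
  also have "\<dots> = (\<Sum>j\<in>{..<n} \<inter> {j. j < p}. weight j)"
    by (simp add: sum.inter_restrict)
  also have "{..<n} \<inter> {j. j < p} = {0..<p}"
    using assms by auto
  finally show ?thesis
    by (simp add: sum_weight levels_0)
qed

lemma sum_weight_div_sq:
  assumes "0 < p" "p \<le> q" "q \<le> n"
  shows "(\<Sum>j=p..<q. weight j / (t (Suc j) * t j)\<^sup>2) = 1 / (t p)\<^sup>2 - 1 / (t q)\<^sup>2"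
proof -
  have "(\<Sum>j=p..<q. weight j / (t (Suc j) * t j)\<^sup>2) = (\<Sum>j=p..<q. (- 1 / (t (Suc j))\<^sup>2) - (- 1 / (t j)\<^sup>2))"
  proof (rule sum.cong[OF refl])
    fix j assume "j \<in> {p..<q}"
    then have "0 < t j" "0 < t (Suc j)"
      using assms levels_pos by auto
    then show "weight j / (t (Suc j) * t j)\<^sup>2 = (- 1 / (t (Suc j))\<^sup>2) - (- 1 / (t j)\<^sup>2)"
      unfolding weight_def by (simp add: field_simps power2_eq_square)
  qed
  also have "\<dots> = (- 1 / (t q)\<^sup>2) - (- 1 / (t p)\<^sup>2)"
    using assms(2) by (rule sum_Suc_diff')
  finally show ?thesis
    by simp
qed

lemma sum_weight_div_ge:
  assumes "0 < p" "p \<le> q" "q \<le> n"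
  shows "(t q / t p - 1) * (3 - t q / t p) \<le> (\<Sum>j=p..<q. weight j / (t (Suc j) * t j))"
  using assms(2)
proof (induction q rule: dec_induct)
  case base
  show ?case
    using levels_pos[of p] assms by simp
next
  case (step q)
  define r s where "r = t q / t p" and "s = t (Suc q) / t q"
  have "0 < t p" "0 < t q" "t q < t (Suc q)"
    using assms step levels_pos levels_less[of q "Suc q"] by auto
  then have weight_q: "weight q / (t (Suc q) * t q) = s - 1 / s"
    and ratio: "t (Suc q) / t p = r * s" and "1 \<le> s"
    by (simp_all add: r_def s_def weight_def field_simps power2_eq_square)
  have "(r * s - 1) * (3 - r * s) \<le> (r - 1) * (3 - r) + (s - 1 / s)"
    using parabola_mult_step \<open>1 \<le> s\<close> .
  moreover have "(r - 1) * (3 - r) \<le> (\<Sum>j=p..<q. weight j / (t (Suc j) * t j))"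
    using step.IH by (simp add: r_def)
  ultimately show ?case
    unfolding ratio using step.hyps(1) weight_q by simp
qed

lemma test_energy_split:
  assumes "p \<le> q" "q \<le> n"
  shows "(\<Sum>j<n. weight j * (test j (t q) - test j (t p))\<^sup>2)
       = (\<Sum>j=p..<q. weight j * (1 - (t p)\<^sup>2 / (t (Suc j) * t j))\<^sup>2)
         + ((t q)\<^sup>2 - (t p)\<^sup>2)\<^sup>2 * (\<Sum>j=q..<n. weight j / (t (Suc j) * t j)\<^sup>2)"
proof -
  let ?T = "\<lambda>j. weight j * (test j (t q) - test j (t p))\<^sup>2"
  have "(\<Sum>j<n. ?T j) = (\<Sum>j=0..<p. ?T j) + (\<Sum>j=p..<q. ?T j) + (\<Sum>j=q..<n. ?T j)"
    using assms by (simp add: atLeast0LessThan[symmetric] sum.atLeastLessThan_concat)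
  moreover have "?T j = 0" if "j < p" for j
    using that assms levels_le_iff[of "Suc j" p] levels_le_iff[of "Suc j" q] by (simp add: test_def)
  moreover have "?T j = weight j * (1 - (t p)\<^sup>2 / (t (Suc j) * t j))\<^sup>2" if "p \<le> j" "j < q" for j
    using that assms levels_le_iff[of "Suc j" p] levels_le_iff[of "Suc j" q] by (simp add: test_def)
  moreover have "?T j = ((t q)\<^sup>2 - (t p)\<^sup>2)\<^sup>2 * (weight j / (t (Suc j) * t j)\<^sup>2)" if "q \<le> j" "j < n" for j
    using that assms levels_le_iff[of "Suc j" p] levels_le_iff[of "Suc j" q]
    by (simp add: test_def diff_divide_distrib[symmetric] power_divide)
  ultimately show ?thesis
    by (simp add: sum_distrib_left)
qed

lemma sum_weight_mult_sq_expand: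
  assumes "p \<le> q"
  shows "(\<Sum>j=p..<q. weight j * (1 - c / (t (Suc j) * t j))\<^sup>2)
       = ((t q)\<^sup>2 - (t p)\<^sup>2) - 2 * c * (\<Sum>j=p..<q. weight j / (t (Suc j) * t j))
         + c\<^sup>2 * (\<Sum>j=p..<q. weight j / (t (Suc j) * t j)\<^sup>2)"
proof -
  have "weight j * (1 - c / (t (Suc j) * t j))\<^sup>2
      = weight j - 2 * c * (weight j / (t (Suc j) * t j)) + c\<^sup>2 * (weight j / (t (Suc j) * t j)\<^sup>2)" for j
    by (simp add: power2_diff power_divide algebra_simps)
  then show ?thesis
    using sum_weight[OF assms] by (simp add: sum.distrib sum_subtractf sum_distrib_left)
qed

lemma test_edge_ordered:
  assumes "p \<le> q" "q \<le> n"
  shows "(\<Sum>j<n. weight j * (test j (t q) - test j (t p))\<^sup>2) \<le> 4 * (t q - t p)\<^sup>2"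
proof (cases "q = 0")
  case True
  with assms show ?thesis
    by (simp add: test_energy_split)
next
  case False
  define a b where "a = t p" and "b = t q"
  define S1 S2 where "S1 = (\<Sum>j=p..<q. weight j / (t (Suc j) * t j))"
    and "S2 = (\<Sum>j=p..<q. weight j / (t (Suc j) * t j)\<^sup>2)"
  have b_pos: "0 < b"
    using assms False levels_pos by (simp add: b_def)
  have "(\<Sum>j=q..<n. weight j / (t (Suc j) * t j)\<^sup>2) \<le> 1 / b\<^sup>2"
    using sum_weight_div_sq[of q n] assms False by (simp add: b_def)
  from mult_left_mono[OF this, of "(b\<^sup>2 - a\<^sup>2)\<^sup>2"]
  have "(\<Sum>j<n. weight j * (test j (t q) - test j (t p))\<^sup>2)
      \<le> (b\<^sup>2 - a\<^sup>2) - 2 * a\<^sup>2 * S1 + (a\<^sup>2)\<^sup>2 * S2 + (b\<^sup>2 - a\<^sup>2)\<^sup>2 / b\<^sup>2"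
    using test_energy_split[OF assms] sum_weight_mult_sq_expand[OF assms(1), of "a\<^sup>2"]
    by (simp add: a_def b_def S1_def S2_def)
  also have "\<dots> \<le> 4 * (b - a)\<^sup>2"
  proof (cases "p = 0")
    case True
    then show ?thesis
      using b_pos levels_0 by (simp add: a_def power2_eq_square)
  next
    case False
    then have a_pos: "0 < a"
      using assms levels_pos by (simp add: a_def)
    have "(b / a - 1) * (3 - b / a) \<le> S1"
      using sum_weight_div_ge[of p q] False assms by (simp add: S1_def a_def b_def)
    from mult_left_mono[OF this, of "2 * a\<^sup>2"]
    have "2 * a\<^sup>2 * ((b / a - 1) * (3 - b / a)) \<le> 2 * a\<^sup>2 * S1"
      by simp
    moreover have "2 * a\<^sup>2 * ((b / a - 1) * (3 - b / a)) = 2 * (b - a) * (3 * a - b)"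
      using a_pos by (simp add: field_simps power2_eq_square)
    moreover have "S2 = 1 / a\<^sup>2 - 1 / b\<^sup>2"
      using sum_weight_div_sq[of p q] False assms by (simp add: S2_def a_def b_def)
    then have "(a\<^sup>2)\<^sup>2 * S2 + (b\<^sup>2 - a\<^sup>2)\<^sup>2 / b\<^sup>2 = b\<^sup>2 - a\<^sup>2"
      using a_pos b_pos by (simp only:) (simp add: field_simps power2_eq_square)
    moreover have "2 * (b\<^sup>2 - a\<^sup>2) - 2 * (b - a) * (3 * a - b) = 4 * (b - a)\<^sup>2"
      by (simp add: power2_eq_square algebra_simps)
    ultimately show ?thesis
      by argo
  qed
  finally show ?thesis
    by (simp add: a_def b_def)
qed

lemma test_edge:
  assumes "p \<le> n" "q \<le> n"
  shows "(\<Sum>j<n. weight j * (test j (t p) - test j (t q))\<^sup>2) \<le> 4 * (t p - t q)\<^sup>2"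
  using test_edge_ordered[of p q] test_edge_ordered[of q p] assms
  by (cases "p \<le> q") (simp_all add: power2_commute)

end

lemma levels_of_finite_set:
  fixes T :: "real set"
  assumes "finite T" "0 \<in> T" "\<And>v. v \<in> T \<Longrightarrow> 0 \<le> v"
  obtains t n where "levels t n" "t ` {..n} = T"
proof
  define L where "L = sorted_list_of_set T"
  have L: "sorted_wrt (<) L" "set L = T" "length L = card T"
    using assms(1) by (simp_all add: L_def strict_sorted_list_of_set)
  moreover have "0 < card T"
    using assms(1,2) card_gt_0_iff by blast
  ultimately have "{..card T - 1} = {0..<length L}"
    by auto
  then have range: "(\<lambda>j. L ! j) ` {..card T - 1} = T"
    using nth_image[of "length L" L] L(2) by simp
  have less: "L ! i < L ! j" if "i < j" "j \<le> card T - 1" for i j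
    using sorted_wrt_nth_less[OF L(1) that(1)] that \<open>0 < card T\<close> L(3) by simp
  obtain i where "i \<le> card T - 1" "L ! i = 0"
    using range assms(2) by (metis atMost_iff imageE)
  moreover have "0 \<le> L ! 0"
    using range assms(3) by (metis atMost_iff image_eqI le0)
  ultimately have "L ! 0 = 0"
    using less[of 0 i] by (cases "i = 0") auto
  with less show "levels (\<lambda>j. L ! j) (card T - 1)"
    unfolding levels_def by blast
  show "(\<lambda>j. L ! j) ` {..card T - 1} = T"
    by (fact range)
qed

section \<open>Dirichlet form, capacity and Dirichlet eigenvalues\<close>

lemma linear_coeff_eq_0_if_nonneg_quadratic:
  fixes a b :: real
  assumes "\<And>e. 0 \<le> 2 * e * a + e\<^sup>2 * b"
  shows "a = 0"
proof (rule ccontr)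
  assume "a \<noteq> 0"
  define d where "d = 1 / (\<bar>b\<bar> + 1)"
  have "0 < d" "d * b < 2"
    unfolding d_def by (auto simp: field_simps abs_if split: if_splits)
  then have "a\<^sup>2 * d * (d * b - 2) < 0"
    using \<open>a \<noteq> 0\<close> by (simp add: mult_pos_neg)
  moreover have "2 * (- a * d) * a + (- a * d)\<^sup>2 * b = a\<^sup>2 * d * (d * b - 2)"
    by (simp add: algebra_simps power2_eq_square)
  ultimately show False
    using assms[of "- a * d"] by linarith
qed

lemma pos_part_diff_sq_le:
  fixes a b s :: real
  shows "(max 0 (a - s) - max 0 (b - s))\<^sup>2 \<le> (a - b) * (max 0 (a - s) - max 0 (b - s))"
proof -
  let ?d = "max 0 (a - s) - max 0 (b - s)"
  have "\<bar>?d\<bar> \<le> \<bar>a - b\<bar>"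
    by (simp add: max_def)
  have "0 \<le> (a - b) * ?d"
  proof (cases "a \<le> b")
    case True
    then have "?d \<le> 0"
      by (simp add: max_def)
    with True show ?thesis
      by (simp add: mult_nonpos_nonpos)
  next
    case False
    then have "0 \<le> ?d"
      by (simp add: max_def)
    with False show ?thesis
      by simp
  qed
  have "?d\<^sup>2 = \<bar>?d\<bar> * \<bar>?d\<bar>"
    by (simp add: power2_eq_square)
  also have "\<dots> \<le> \<bar>a - b\<bar> * \<bar>?d\<bar>"
    using \<open>\<bar>?d\<bar> \<le> \<bar>a - b\<bar>\<close> by (rule mult_right_mono) simp
  also have "\<dots> = (a - b) * ?d"
    using \<open>0 \<le> (a - b) * ?d\<close> by (simp only: abs_mult[symmetric] abs_of_nonneg)
  finally show ?thesis .
qed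

definition admissible :: "'a set \<Rightarrow> 'a set \<Rightarrow> ('a \<Rightarrow> real) \<Rightarrow> bool" where
  "admissible A B f \<longleftrightarrow> (\<forall>x\<in>A. f x = 0) \<and> (\<forall>x\<in>B. f x = 1)"

locale reversible_chain =
  fixes V :: "'a set" and P :: "'a \<Rightarrow> 'a \<Rightarrow> real" and m :: "'a \<Rightarrow> real"
  assumes finite_V: "finite V"
    and two_le_card_V: "2 \<le> card V"
    and P_nonneg: "\<And>x y. x \<in> V \<Longrightarrow> y \<in> V \<Longrightarrow> 0 \<le> P x y"
    and connected: "\<And>x y. x \<in> V \<Longrightarrow> y \<in> V \<Longrightarrow>
           (x, y) \<in> {(u, v). u \<in> V \<and> v \<in> V \<and> 0 < P u v}\<^sup>*"
    and m_nonneg: "\<And>x. x \<in> V \<Longrightarrow> 0 \<le> m x"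
    and sum_m: "(\<Sum>x\<in>V. m x) = 1"
    and reversible: "\<And>x y. x \<in> V \<Longrightarrow> y \<in> V \<Longrightarrow> m x * P x y = m y * P y x"
begin

abbreviation energy :: "('a \<Rightarrow> real) \<Rightarrow> ('a \<Rightarrow> real) \<Rightarrow> real" where
  "energy \<equiv> dirichlet V P m"

abbreviation norm_sq :: "('a \<Rightarrow> real) \<Rightarrow> real" where
  "norm_sq f \<equiv> inner_m V m f f"

abbreviation cap :: "'a set \<Rightarrow> 'a set \<Rightarrow> real" where
  "cap \<equiv> capacity V P m"

abbreviation lam :: "'a set \<Rightarrow> real" where
  "lam \<equiv> lambda_D V P m"

definition conductance :: "'a \<Rightarrow> 'a \<Rightarrow> real" where
  "conductance x y = m x * P x y"

lemma m_pos:
  assumes "x \<in> V"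
  shows "0 < m x"
proof -
  obtain x0 where x0: "x0 \<in> V" "m x0 \<noteq> 0"
    using sum_m by (metis sum.neutral zero_neq_one)
  have "(x0, x) \<in> {(u, v). u \<in> V \<and> v \<in> V \<and> 0 < P u v}\<^sup>*"
    using connected x0(1) assms .
  then show ?thesis
  proof (induction rule: rtrancl_induct)
    case base
    show ?case
      using x0 m_nonneg[of x0] by simp
  next
    case (step y z)
    then have "y \<in> V" "z \<in> V" "0 < m y * P y z"
      by auto
    then have "0 < m z * P z y"
      using reversible[of y z] by simp
    then show ?case
      using step m_nonneg[of z] P_nonneg[of z y] by (simp add: zero_less_mult_iff)
  qed
qed

lemma conductance_commute: "x \<in> V \<Longrightarrow> y \<in> V \<Longrightarrow> conductance x y = conductance y x"
  by (simp add: conductance_def reversible)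

lemma conductance_nonneg: "x \<in> V \<Longrightarrow> y \<in> V \<Longrightarrow> 0 \<le> conductance x y"
  by (simp add: conductance_def m_nonneg P_nonneg)

lemma conductance_pos: "x \<in> V \<Longrightarrow> y \<in> V \<Longrightarrow> 0 < P x y \<Longrightarrow> 0 < conductance x y"
  by (simp add: conductance_def m_pos)

lemma dirichlet_edge_form:
  "energy f g = (\<Sum>x\<in>V. \<Sum>y\<in>V. conductance x y * (f x - f y) * (g x - g y)) / 2"
proof -
  define S where "S = (\<Sum>x\<in>V. \<Sum>y\<in>V. conductance x y * (f x - f y) * g x)"
  have "energy f g = (\<Sum>x\<in>V. \<Sum>y\<in>V. - (P x y * (f y - f x) * g x * m x))"
    by (simp add: dirichlet_def inner_m_def laplacian_def sum_distrib_right sum_negf)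
  also have "\<dots> = S"
    unfolding S_def conductance_def by (intro sum.cong refl) (simp add: algebra_simps)
  finally have energy_S: "energy f g = S" .
  define S' where "S' = (\<Sum>x\<in>V. \<Sum>y\<in>V. conductance x y * (f y - f x) * g y)"
  have "S = S'"
    unfolding S_def S'_def by (subst sum.swap) (intro sum.cong refl; simp add: conductance_commute)
  moreover have "(\<Sum>x\<in>V. \<Sum>y\<in>V. conductance x y * (f x - f y) * (g x - g y)) = S + S'"
    unfolding S_def S'_def sum.distrib[symmetric] by (intro sum.cong refl) (simp add: algebra_simps)
  ultimately show ?thesis
    using energy_S by simp
qed

lemma dirichlet_commute: "energy f g = energy g f"
  unfolding dirichlet_edge_form
  by (intro arg_cong[where f = "\<lambda>s. s / 2"] sum.cong refl) (simp add: ac_simps)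

lemma dirichlet_nonneg: "0 \<le> energy f f"
  unfolding dirichlet_edge_form
  by (intro divide_nonneg_pos sum_nonneg) (simp_all add: conductance_nonneg mult.assoc)

lemma dirichlet_affine_right:
  "energy f (\<lambda>x. a * g x + b * h x + c) = a * energy f g + b * energy f h"
proof -
  have "energy f (\<lambda>x. a * g x + b * h x + c) =
     (\<Sum>x\<in>V. \<Sum>y\<in>V. a * (conductance x y * (f x - f y) * (g x - g y))
        + b * (conductance x y * (f x - f y) * (h x - h y))) / 2"
    unfolding dirichlet_edge_form by (intro arg_cong[where f = "\<lambda>s. s / 2"] sum.cong refl)
      (simp add: algebra_simps)
  also have "\<dots> = a * energy f g + b * energy f h"
    unfolding dirichlet_edge_form by (simp add: sum.distrib sum_distrib_left add_divide_distrib)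
  finally show ?thesis .
qed

lemma dirichlet_affine_left:
  "energy (\<lambda>x. a * g x + b * h x + c) f = a * energy g f + b * energy h f"
  by (simp only: dirichlet_commute[of _ f] dirichlet_affine_right)

lemma dirichlet_one_minus: "energy (\<lambda>x. 1 - f x) (\<lambda>x. 1 - f x) = energy f f"
  unfolding dirichlet_edge_form
  by (intro arg_cong[where f = "\<lambda>s. s / 2"] sum.cong refl) (simp add: algebra_simps)

lemma dirichlet_scale: "energy (\<lambda>x. a * f x) (\<lambda>x. a * f x) = a\<^sup>2 * energy f f"
proof -
  have scale_right: "energy g (\<lambda>x. a * f x) = a * energy g f" for g
    using dirichlet_affine_right[of g a f 0 f 0] by simp
  have "energy (\<lambda>x. a * f x) (\<lambda>x. a * f x) = a * energy f (\<lambda>x. a * f x)"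
    using scale_right[of "\<lambda>x. a * f x"] dirichlet_commute[of "\<lambda>x. a * f x" f] by simp
  also have "\<dots> = a\<^sup>2 * energy f f"
    using scale_right[of f] by (simp add: power2_eq_square)
  finally show ?thesis .
qed

lemma dirichlet_le_edgewise:
  assumes "\<And>x y. x \<in> V \<Longrightarrow> y \<in> V \<Longrightarrow> (g x - g y)\<^sup>2 \<le> (f x - f y) * (k x - k y)"
  shows "energy g g \<le> energy f k"
  unfolding dirichlet_edge_form
proof (intro divide_right_mono sum_mono)
  fix x y
  assume "x \<in> V" "y \<in> V"
  then show "conductance x y * (g x - g y) * (g x - g y) \<le> conductance x y * (f x - f y) * (k x - k y)"
    using assms[of x y] conductance_nonneg[of x y] mult_left_mono
    by (fastforce simp: power2_eq_square mult.assoc)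
qed simp

lemma dirichlet_le_contraction:
  assumes "\<And>x y. x \<in> V \<Longrightarrow> y \<in> V \<Longrightarrow> \<bar>g x - g y\<bar> \<le> \<bar>f x - f y\<bar>"
  shows "energy g g \<le> energy f f"
  by (rule dirichlet_le_edgewise) (metis abs_le_square_iff assms power2_eq_square)

lemma dirichlet_eq_0_imp_const:
  assumes "energy h h = 0" "x \<in> V" "y \<in> V"
  shows "h x = h y"
proof -
  have term_nonneg: "0 \<le> conductance u v * (h u - h v) * (h u - h v)" if "u \<in> V" "v \<in> V" for u v
    using conductance_nonneg[OF that] by (simp add: mult.assoc)
  then have inner_nonneg: "0 \<le> (\<Sum>v\<in>V. conductance u v * (h u - h v) * (h u - h v))" if "u \<in> V" for u
    using that by (simp add: sum_nonneg)
  have "(\<Sum>u\<in>V. \<Sum>v\<in>V. conductance u v * (h u - h v) * (h u - h v)) = 0"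
    using assms(1) by (simp add: dirichlet_edge_form)
  then have "conductance u v * (h u - h v) * (h u - h v) = 0" if "u \<in> V" "v \<in> V" for u v
    using that term_nonneg inner_nonneg finite_V by (simp add: sum_nonneg_eq_0_iff)
  then have edge: "h u = h v" if "u \<in> V" "v \<in> V" "0 < P u v" for u v
    using that conductance_pos[OF that] by fastforce
  have "(x, y) \<in> {(u, v). u \<in> V \<and> v \<in> V \<and> 0 < P u v}\<^sup>*"
    using connected assms(2,3) .
  then show ?thesis
  proof (induction rule: rtrancl_induct)
    case (step u v)
    then show ?case
      using edge by auto
  qed simp
qed

lemma norm_sq_scale: "norm_sq (\<lambda>x. a * f x) = a\<^sup>2 * norm_sq f"
  unfolding inner_m_def by (simp add: sum_distrib_left power2_eq_square algebra_simps)

lemma norm_sq_ge_on_subset: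
  assumes "B \<subseteq> V" "\<And>x. x \<in> B \<Longrightarrow> s \<le> f x * f x"
  shows "s * sum m B \<le> norm_sq f"
proof -
  have "s * sum m B = (\<Sum>x\<in>B. s * m x)"
    by (simp add: sum_distrib_left)
  also have "\<dots> \<le> (\<Sum>x\<in>B. f x * f x * m x)"
    using assms m_nonneg by (intro sum_mono mult_right_mono) auto
  also have "\<dots> \<le> (\<Sum>x\<in>V. f x * f x * m x)"
    using assms m_nonneg finite_V by (intro sum_mono2) auto
  finally show ?thesis
    unfolding inner_m_def .
qed

lemma sum_m_pos: "B \<subseteq> V \<Longrightarrow> B \<noteq> {} \<Longrightarrow> 0 < sum m B"
  using m_pos finite_V by (meson finite_subset subsetD sum_pos)

definition equilibrium :: "'a set \<Rightarrow> 'a set \<Rightarrow> ('a \<Rightarrow> real) \<Rightarrow> bool" where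
  "equilibrium A B h \<longleftrightarrow> admissible A B h \<and> (\<forall>g. admissible A B g \<longrightarrow> energy h h \<le> energy g g)"

lemma capacity_le: "admissible A B g \<Longrightarrow> cap A B \<le> energy g g"
  unfolding capacity_def admissible_def
  by (rule cInf_lower) (auto intro!: bdd_belowI[of _ 0] dirichlet_nonneg)

lemma capacity_eq_equilibrium: "equilibrium A B h \<Longrightarrow> cap A B = energy h h"
  unfolding capacity_def equilibrium_def admissible_def
  by (rule cInf_eq_minimum) auto

text \<open>Minimise over the compact set of admissible functions with values in \<open>[0, 1]\<close>; clipping to
  \<open>[0, 1]\<close> does not increase the energy, so the minimiser is a global one.\<close>
lemma equilibrium_exists:
  assumes "A \<subseteq> V" "B \<subseteq> V" "A \<inter> B = {}"
  obtains h where "equilibrium A B h"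
proof -
  define S where "S x = (if x \<in> A then {0} else if x \<in> B then {1} else {0..1::real})" for x
  define K where "K = PiE V S"
  let ?T = "product_topology (\<lambda>_. euclideanreal) V"
  have "compactin ?T K"
    unfolding K_def compactin_PiE by (auto simp: S_def)
  moreover have "continuous_map ?T euclideanreal (\<lambda>f. energy f f)"
    unfolding dirichlet_edge_form
    by (intro continuous_intros continuous_map_sum finite_V)
      (auto intro: continuous_map_product_projection)
  ultimately have "compact ((\<lambda>f. energy f f) ` K)"
    using image_compactin by fastforce
  moreover have "restrict (\<lambda>x. if x \<in> B then 1 else 0) V \<in> K"
    using assms unfolding K_def S_def by auto
  ultimately obtain h where h: "h \<in> K" "\<And>g. g \<in> K \<Longrightarrow> energy h h \<le> energy g g"
    using compact_attains_inf[of "(\<lambda>f. energy f f) ` K"] by blast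
  have h_S: "h x \<in> S x" if "x \<in> V" for x
    using h(1) that by (simp add: K_def PiE_iff)
  have "admissible A B h"
    unfolding admissible_def
  proof (intro conjI ballI)
    fix x
    assume "x \<in> A"
    then show "h x = 0"
      using h_S[of x] assms by (auto simp: S_def)
  next
    fix x
    assume "x \<in> B"
    with assms have "x \<in> V" "x \<notin> A"
      by auto
    with h_S[of x] \<open>x \<in> B\<close> show "h x = 1"
      by (simp add: S_def)
  qed
  moreover have "energy h h \<le> energy g g" if "admissible A B g" for g
  proof -
    define g' where "g' = restrict (\<lambda>x. max 0 (min 1 (g x))) V"
    have "g' \<in> K"
      using that assms unfolding g'_def K_def S_def admissible_def by auto
    then have "energy h h \<le> energy g' g'"
      by (rule h(2))
    also have "\<dots> \<le> energy g g"
      by (rule dirichlet_le_contraction) (auto simp: g'_def abs_if max_def min_def)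
    finally show ?thesis .
  qed
  ultimately show ?thesis
    using that unfolding equilibrium_def by blast
qed

lemma equilibrium_orthogonal:
  assumes "equilibrium A B h" "\<And>x. x \<in> A \<union> B \<Longrightarrow> \<phi> x = 0"
  shows "energy h \<phi> = 0"
proof (rule linear_coeff_eq_0_if_nonneg_quadratic)
  fix e :: real
  define g where "g x = 1 * h x + e * \<phi> x + 0" for x
  have "admissible A B g"
    using assms unfolding equilibrium_def admissible_def g_def by auto
  then have "energy h h \<le> energy g g"
    using assms(1) unfolding equilibrium_def by blast
  also have "energy g g = energy h h + 2 * e * energy h \<phi> + e\<^sup>2 * energy \<phi> \<phi>"
    unfolding g_def[abs_def] dirichlet_affine_left dirichlet_affine_right dirichlet_commute[of \<phi> h]
    by (simp add: power2_eq_square algebra_simps)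
  finally show "0 \<le> 2 * e * energy h \<phi> + e\<^sup>2 * energy \<phi> \<phi>"
    by simp
qed

lemma equilibrium_swap:
  assumes "equilibrium A B h"
  shows "equilibrium B A (\<lambda>x. 1 - h x)"
  unfolding equilibrium_def
proof (intro conjI allI impI)
  show "admissible B A (\<lambda>x. 1 - h x)"
    using assms by (simp add: equilibrium_def admissible_def)
  fix g
  assume "admissible B A g"
  then have "admissible A B (\<lambda>x. 1 - g x)"
    by (simp add: admissible_def)
  then have "energy h h \<le> energy (\<lambda>x. 1 - g x) (\<lambda>x. 1 - g x)"
    using assms by (simp add: equilibrium_def)
  then show "energy (\<lambda>x. 1 - h x) (\<lambda>x. 1 - h x) \<le> energy g g"
    by (simp add: dirichlet_one_minus)
qed

lemma capacity_commute:
  assumes "A \<subseteq> V" "B \<subseteq> V" "A \<inter> B = {}"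
  shows "cap B A = cap A B"
proof -
  obtain h where "equilibrium A B h"
    using equilibrium_exists[OF assms] .
  with equilibrium_swap[OF this] show ?thesis
    by (simp add: capacity_eq_equilibrium dirichlet_one_minus)
qed

lemma capacity_nonneg:
  assumes "A \<subseteq> V" "B \<subseteq> V" "A \<inter> B = {}"
  shows "0 \<le> cap A B"
  using equilibrium_exists[OF assms] by (metis capacity_eq_equilibrium dirichlet_nonneg)

lemma capacity_pos:
  assumes "A \<subseteq> V" "B \<subseteq> V" "A \<inter> B = {}" "A \<noteq> {}" "B \<noteq> {}"
  shows "0 < cap A B"
proof -
  obtain h where h: "equilibrium A B h"
    using equilibrium_exists[OF assms(1-3)] .
  obtain a b where "a \<in> A" "b \<in> B"
    using assms by blast
  with h have "h a \<noteq> h b"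
    by (auto simp: equilibrium_def admissible_def)
  with assms \<open>a \<in> A\<close> \<open>b \<in> B\<close> have "energy h h \<noteq> 0"
    using dirichlet_eq_0_imp_const by blast
  with h show ?thesis
    using dirichlet_nonneg[of h] by (simp add: capacity_eq_equilibrium)
qed

lemma capacity_mono:
  assumes "A \<subseteq> A'" "A' \<subseteq> V" "B \<subseteq> V" "A' \<inter> B = {}"
  shows "cap A B \<le> cap A' B"
proof -
  obtain h where h: "equilibrium A' B h"
    using equilibrium_exists[OF assms(2-4)] .
  then have "admissible A B h"
    using assms(1) by (auto simp: equilibrium_def admissible_def)
  with h show ?thesis
    by (simp add: capacity_le capacity_eq_equilibrium)
qed

lemma norm2_m_eq_1_iff: "norm2_m V m f = 1 \<longleftrightarrow> norm_sq f = 1"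
  by (simp add: norm2_m_def)

lemma lambda_D_le_Rayleigh_quotient:
  assumes "\<And>x. x \<in> V - X \<Longrightarrow> g x = 0" "0 < norm_sq g"
  shows "lam X \<le> energy g g / norm_sq g"
proof -
  define a where "a = 1 / sqrt (norm_sq g)"
  define f where "f = (\<lambda>x. a * g x)"
  have a2: "a\<^sup>2 = 1 / norm_sq g"
    using assms(2) by (simp add: a_def power_divide)
  have "norm_sq f = 1"
    using assms(2) by (simp add: f_def norm_sq_scale a2)
  moreover have "\<forall>x\<in>V - X. f x = 0"
    using assms(1) by (simp add: f_def)
  moreover have "energy f f = energy g g / norm_sq g"
    by (simp add: f_def dirichlet_scale a2)
  ultimately have "energy g g / norm_sq g
      \<in> {dirichlet V P m f f | f. norm2_m V m f = 1 \<and> (\<forall>x\<in>V - X. f x = 0)}"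
    unfolding norm2_m_eq_1_iff by force
  then show ?thesis
    unfolding lambda_D_def by (rule cInf_lower) (auto intro!: bdd_belowI[of _ 0] dirichlet_nonneg)
qed

lemma lambda_D_ge:
  assumes "x0 \<in> X" "x0 \<in> V"
    and "\<And>f. (\<And>x. x \<in> V - X \<Longrightarrow> f x = 0) \<Longrightarrow> k * norm_sq f \<le> energy f f"
  shows "k \<le> lam X"
  unfolding lambda_D_def
proof (rule cInf_greatest)
  define f0 where "f0 x = (if x = x0 then 1 / sqrt (m x0) else 0)" for x
  have "norm_sq f0 = (\<Sum>x\<in>V. if x = x0 then 1 else 0)"
    unfolding inner_m_def f0_def using m_pos[OF assms(2)] by (intro sum.cong) auto
  also have "\<dots> = 1"
    using assms(2) finite_V by simp
  finally have "norm2_m V m f0 = 1"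
    by (simp add: norm2_m_eq_1_iff)
  moreover have "\<forall>x\<in>V - X. f0 x = 0"
    using assms(1) by (auto simp: f0_def)
  ultimately show "{dirichlet V P m f f | f. norm2_m V m f = 1 \<and> (\<forall>x\<in>V - X. f x = 0)} \<noteq> {}"
    by blast
next
  fix v
  assume "v \<in> {dirichlet V P m f f | f. norm2_m V m f = 1 \<and> (\<forall>x\<in>V - X. f x = 0)}"
  then obtain f where "v = energy f f" "norm_sq f = 1" "\<forall>x\<in>V - X. f x = 0"
    by (auto simp: norm2_m_eq_1_iff)
  then show "k \<le> v"
    using assms(3)[of f] by simp
qed

lemma lambda_D_le_capacity:
  assumes h: "equilibrium A B h" and B: "B \<subseteq> V" "B \<noteq> {}"
    and X: "{x \<in> V. 1 / 2 < h x} \<subseteq> X"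
  shows "lam X \<le> 2 * cap A B / sum m B"
proof -
  define g where "g x = max 0 (h x - 1 / 2)" for x
  have hA: "h x = 0" if "x \<in> A" for x
    using h that by (simp add: equilibrium_def admissible_def)
  have hB: "h x = 1" if "x \<in> B" for x
    using h that by (simp add: equilibrium_def admissible_def)
  have "energy h (\<lambda>x. 1 * g x + (- 1 / 2) * h x + 0) = 0"
    \<comment> \<open>\<open>g - h/2\<close> vanishes on \<open>A \<union> B\<close>\<close>
    by (rule equilibrium_orthogonal[OF h]) (auto simp: g_def hA hB)
  then have "energy h g = cap A B / 2"
    unfolding dirichlet_affine_right by (simp add: capacity_eq_equilibrium[OF h])
  moreover have "energy g g \<le> energy h g"
    unfolding g_def by (rule dirichlet_le_edgewise) (rule pos_part_diff_sq_le)
  moreover have "1 / 4 * sum m B \<le> norm_sq g"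
    using B by (intro norm_sq_ge_on_subset) (auto simp: g_def hB)
  moreover have "0 < sum m B" "0 \<le> cap A B"
    using B sum_m_pos dirichlet_nonneg capacity_eq_equilibrium[OF h] by auto
  ultimately have "energy g g / norm_sq g \<le> (cap A B / 2) / (1 / 4 * sum m B)"
    by (intro frac_le) auto
  also have "\<dots> = 2 * cap A B / sum m B"
    by simp
  finally have "energy g g / norm_sq g \<le> 2 * cap A B / sum m B" .
  moreover have "g x = 0" if "x \<in> V - X" for x
    using X that by (auto simp: g_def)
  then have "lam X \<le> energy g g / norm_sq g"
    using \<open>1 / 4 * sum m B \<le> norm_sq g\<close> \<open>0 < sum m B\<close>
    by (intro lambda_D_le_Rayleigh_quotient) auto
  ultimately show ?thesis
    by linarith
qed

subsection \<open>Maz'ya's capacitary inequality\<close>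

lemma norm_sq_eq_sum_superlevel:
  assumes "levels t n" "\<And>x. x \<in> V \<Longrightarrow> a x \<in> t ` {..n}"
  shows "norm_sq a = (\<Sum>j<n. levels.weight t j * sum m {x \<in> V. t (Suc j) \<le> a x})"
proof -
  interpret levels t n by fact
  have "a x * a x * m x = (\<Sum>j<n. if t (Suc j) \<le> a x then weight j * m x else 0)" if "x \<in> V" for x
  proof -
    from assms(2)[OF that] obtain p where "a x = t p" "p \<le> n"
      by (auto elim: imageE)
    then have "a x * a x * m x = (\<Sum>j<n. if t (Suc j) \<le> a x then weight j else 0) * m x"
      using sq_eq_sum_weight[of p] by (simp add: power2_eq_square)
    also have "\<dots> = (\<Sum>j<n. if t (Suc j) \<le> a x then weight j * m x else 0)"
      unfolding sum_distrib_right by (intro sum.cong) auto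
    finally show ?thesis .
  qed
  then have "norm_sq a = (\<Sum>x\<in>V. \<Sum>j<n. if t (Suc j) \<le> a x then weight j * m x else 0)"
    unfolding inner_m_def by (rule sum.cong[OF refl])
  also have "\<dots> = (\<Sum>j<n. \<Sum>x\<in>V. if t (Suc j) \<le> a x then weight j * m x else 0)"
    by (rule sum.swap)
  also have "\<dots> = (\<Sum>j<n. weight j * sum m {x \<in> V. t (Suc j) \<le> a x})"
  proof (rule sum.cong[OF refl])
    fix j
    have "(\<Sum>x\<in>V. if t (Suc j) \<le> a x then weight j * m x else 0)
        = (\<Sum>x\<in>{x \<in> V. t (Suc j) \<le> a x}. weight j * m x)"
      using finite_V by (rule sum.inter_filter[symmetric])
    then show "(\<Sum>x\<in>V. if t (Suc j) \<le> a x then weight j * m x else 0)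
        = weight j * sum m {x \<in> V. t (Suc j) \<le> a x}"
      by (simp add: sum_distrib_left)
  qed
  finally show ?thesis .
qed

lemma sum_energy_le:
  assumes "\<And>x y. x \<in> V \<Longrightarrow> y \<in> V \<Longrightarrow> (\<Sum>j\<in>J. w j * (g j x - g j y)\<^sup>2) \<le> K * (f x - f y)\<^sup>2"
  shows "(\<Sum>j\<in>J. w j * energy (g j) (g j)) \<le> K * energy f f"
proof -
  define G where "G j x y = w j * (conductance x y * ((g j x - g j y) * (g j x - g j y)))" for j x y
  have "w j * energy (g j) (g j) = (\<Sum>x\<in>V. \<Sum>y\<in>V. G j x y) / 2" for j
    unfolding dirichlet_edge_form G_def times_divide_eq_right sum_distrib_left mult.assoc ..
  then have "(\<Sum>j\<in>J. w j * energy (g j) (g j)) = (\<Sum>j\<in>J. \<Sum>x\<in>V. \<Sum>y\<in>V. G j x y) / 2"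
    by (simp only: sum_divide_distrib)
  also have "(\<Sum>j\<in>J. \<Sum>x\<in>V. \<Sum>y\<in>V. G j x y) = (\<Sum>x\<in>V. \<Sum>y\<in>V. \<Sum>j\<in>J. G j x y)"
    by (subst sum.swap) (rule sum.cong[OF refl sum.swap])
  also have "\<dots> = (\<Sum>x\<in>V. \<Sum>y\<in>V. conductance x y * (\<Sum>j\<in>J. w j * (g j x - g j y)\<^sup>2))"
    unfolding G_def sum_distrib_left power2_eq_square by (simp only: mult.left_commute)
  also have "\<dots> / 2 \<le> (\<Sum>x\<in>V. \<Sum>y\<in>V. conductance x y * (K * (f x - f y)\<^sup>2)) / 2"
    using assms conductance_nonneg by (intro divide_right_mono sum_mono mult_left_mono) auto
  also have "\<dots> = K * energy f f"
    unfolding dirichlet_edge_form times_divide_eq_right sum_distrib_left power2_eq_square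
    by (simp only: mult.left_commute mult.assoc)
  finally show ?thesis .
qed

text \<open>Writing \<open>\<parallel>a\<parallel>\<^sup>2\<close> as a layer-cake sum over the superlevel sets \<open>F j\<close> and testing the capacity
  of each \<open>F j\<close> with \<open>test j \<circ> a\<close>, the weighted energies of the test functions add up to at
  most \<open>4 E(a)\<close> by \<open>test_edge\<close>.\<close>
lemma mazya_inequality_nonneg:
  assumes X: "X \<subseteq> V" and k: "0 \<le> k"
    and cap_ge: "\<And>F. F \<subseteq> X \<Longrightarrow> F \<noteq> {} \<Longrightarrow> k * sum m F \<le> cap (V - X) F"
    and a0: "\<And>x. x \<in> V - X \<Longrightarrow> a x = 0" and a_nonneg: "\<And>x. 0 \<le> a x"
  shows "k * norm_sq a \<le> 4 * energy a a"
proof -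
  have "finite (insert 0 (a ` V))" "\<And>v. v \<in> insert 0 (a ` V) \<Longrightarrow> 0 \<le> v"
    using finite_V a_nonneg by auto
  then obtain t n where "levels t n" and range: "t ` {..n} = insert 0 (a ` V)"
    using levels_of_finite_set by blast
  interpret levels t n by fact
  have a_levels: "a x \<in> t ` {..n}" if "x \<in> V" for x
    using range that by simp
  define F where "F j = {x \<in> V. t (Suc j) \<le> a x}" for j
  define g where "g j x = test j (a x)" for j x
  have cap_F: "k * sum m (F j) \<le> energy (g j) (g j)" if "j < n" for j
  proof -
    have "0 < t (Suc j)"
      using levels_pos that by simp
    then have "F j \<subseteq> X"
      using a0 by (force simp: F_def)
    moreover have "t (Suc j) \<in> insert 0 (a ` V)"
      using range that by (metis Suc_leI atMost_iff image_eqI)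
    then have "F j \<noteq> {}"
      using \<open>0 < t (Suc j)\<close> by (auto simp: F_def)
    moreover have "admissible (V - X) (F j) (g j)"
      using a0 \<open>0 < t (Suc j)\<close> by (auto simp: admissible_def g_def test_def F_def)
    ultimately show ?thesis
      using cap_ge[of "F j"] capacity_le[of "V - X" "F j" "g j"] by linarith
  qed
  have "norm_sq a = (\<Sum>j<n. weight j * sum m (F j))"
    using norm_sq_eq_sum_superlevel[OF \<open>levels t n\<close> a_levels] by (simp add: F_def)
  then have "k * norm_sq a = (\<Sum>j<n. weight j * (k * sum m (F j)))"
    by (simp add: sum_distrib_left ac_simps)
  also have "\<dots> \<le> (\<Sum>j<n. weight j * energy (g j) (g j))"
    by (intro sum_mono mult_left_mono weight_nonneg cap_F) auto
  also have "\<dots> \<le> 4 * energy a a"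
  proof (rule sum_energy_le)
    fix x y
    assume "x \<in> V" "y \<in> V"
    with a_levels obtain p q where "a x = t p" "p \<le> n" "a y = t q" "q \<le> n"
      by (metis atMost_iff imageE)
    then show "(\<Sum>j<n. weight j * (g j x - g j y)\<^sup>2) \<le> 4 * (a x - a y)\<^sup>2"
      using test_edge[of p q] by (simp add: g_def)
  qed
  finally show ?thesis .
qed

lemma mazya_inequality:
  assumes X: "X \<subseteq> V" and k: "0 \<le> k"
    and cap_ge: "\<And>F. F \<subseteq> X \<Longrightarrow> F \<noteq> {} \<Longrightarrow> k * sum m F \<le> cap (V - X) F"
    and f0: "\<And>x. x \<in> V - X \<Longrightarrow> f x = 0"
  shows "k * norm_sq f \<le> 4 * energy f f"
proof -
  have "norm_sq f = norm_sq (\<lambda>x. \<bar>f x\<bar>)"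
    unfolding inner_m_def by simp
  then have "k * norm_sq f = k * norm_sq (\<lambda>x. \<bar>f x\<bar>)"
    by simp
  also have "\<dots> \<le> 4 * energy (\<lambda>x. \<bar>f x\<bar>) (\<lambda>x. \<bar>f x\<bar>)"
    by (rule mazya_inequality_nonneg[OF X k cap_ge]) (auto simp: f0)
  also have "energy (\<lambda>x. \<bar>f x\<bar>) (\<lambda>x. \<bar>f x\<bar>) \<le> energy f f"
    by (rule dirichlet_le_contraction) (rule abs_triangle_ineq3)
  finally show ?thesis
    by simp
qed

lemma capacity_ratio_minimizer:
  assumes "X \<subseteq> V" "X \<noteq> {}"
  obtains B where "B \<subseteq> X" "B \<noteq> {}"
    "\<And>F. F \<subseteq> X \<Longrightarrow> F \<noteq> {} \<Longrightarrow> cap (V - X) B / sum m B \<le> cap (V - X) F / sum m F"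
proof -
  let ?ratio = "\<lambda>F. cap (V - X) F / sum m F"
  let ?S = "{F. F \<subseteq> X \<and> F \<noteq> {}}"
  have fin: "finite ?S"
    using finite_subset[OF assms(1) finite_V] by simp
  have ne: "?S \<noteq> {}"
    using assms(2) by blast
  define B where "B = arg_min_on ?ratio ?S"
  have "B \<in> ?S"
    unfolding B_def using fin ne by (rule arg_min_if_finite(1))
  moreover have "?ratio B \<le> ?ratio F" if "F \<in> ?S" for F
    unfolding B_def using fin ne that by (rule arg_min_least)
  ultimately show ?thesis
    by (intro that[of B]) auto
qed

lemma lambda_D_ge_capacity_ratio:
  assumes X: "X \<subseteq> V" and B: "B \<subseteq> X" "B \<noteq> {}"
    and min: "\<And>F. F \<subseteq> X \<Longrightarrow> F \<noteq> {} \<Longrightarrow> cap (V - X) B / sum m B \<le> cap (V - X) F / sum m F"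
  shows "cap (V - X) B / sum m B / 4 \<le> lam X"
proof -
  define k where "k = cap (V - X) B / sum m B"
  have "0 \<le> k"
    unfolding k_def using X B by (intro divide_nonneg_nonneg capacity_nonneg sum_nonneg m_nonneg) auto
  have k_cap: "k * sum m F \<le> cap (V - X) F" if "F \<subseteq> X" "F \<noteq> {}" for F
    using min[OF that] sum_m_pos[of F] that X by (simp add: k_def le_divide_eq)
  have "k / 4 * norm_sq f \<le> energy f f" if "\<And>x. x \<in> V - X \<Longrightarrow> f x = 0" for f
    using mazya_inequality[of X k f] X \<open>0 \<le> k\<close> k_cap that by simp
  moreover obtain x0 where "x0 \<in> B"
    using B by blast
  ultimately have "k / 4 \<le> lam X"
    using B X by (intro lambda_D_ge[of x0]) auto
  then show ?thesis
    by (simp add: k_def)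
qed

lemma lambda_D_pos:
  assumes "X \<subseteq> V" "X \<noteq> {}" "X \<noteq> V"
  shows "0 < lam X"
proof -
  obtain B where B: "B \<subseteq> X" "B \<noteq> {}"
    and "\<And>F. F \<subseteq> X \<Longrightarrow> F \<noteq> {} \<Longrightarrow> cap (V - X) B / sum m B \<le> cap (V - X) F / sum m F"
    using capacity_ratio_minimizer[OF assms(1,2)] by blast
  then have "cap (V - X) B / sum m B / 4 \<le> lam X"
    using lambda_D_ge_capacity_ratio[OF assms(1)] by blast
  moreover have "0 < cap (V - X) B" "0 < sum m B"
    using assms B by (auto intro!: capacity_pos sum_m_pos)
  ultimately show ?thesis
    by (smt (verit) divide_pos_pos)
qed

end

section \<open>Comparison of the two constants\<close>

lemma Inf_le_mult_Inf:
  fixes S T :: "real set"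
  assumes "finite S" "finite T" "T \<noteq> {}" "\<And>t. t \<in> T \<Longrightarrow> \<exists>s\<in>S. s \<le> c * t"
  shows "Inf S \<le> c * Inf T"
proof -
  have "Inf T \<in> T"
    using assms(2,3) by (simp add: cInf_eq_Min)
  then obtain s where "s \<in> S" "s \<le> c * Inf T"
    using assms(4) by blast
  then show ?thesis
    using cInf_lower[OF _ bdd_below_finite[OF assms(1)]] order_trans by blast
qed

context reversible_chain
begin

lemma capacity_logmean_le_spectral:
  assumes X: "X \<subseteq> V" "X \<noteq> {}" "X \<noteq> V"
  obtains A B where "A \<subseteq> V" "B \<subseteq> V" "A \<noteq> {}" "B \<noteq> {}" "A \<inter> B = {}"
    "logmean (cap A B / sum m A) (cap A B / sum m B) \<le> 4 * logmean (lam X) (lam (V - X))"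
proof -
  have Y: "V - X \<subseteq> V" "V - X \<noteq> {}" "V - X \<noteq> V" and "V - (V - X) = X"
    using X by auto
  obtain B where B: "B \<subseteq> X" "B \<noteq> {}"
    "\<And>F. F \<subseteq> X \<Longrightarrow> F \<noteq> {} \<Longrightarrow> cap (V - X) B / sum m B \<le> cap (V - X) F / sum m F"
    using capacity_ratio_minimizer[OF X(1,2)] by blast
  obtain A where A: "A \<subseteq> V - X" "A \<noteq> {}"
    "\<And>F. F \<subseteq> V - X \<Longrightarrow> F \<noteq> {} \<Longrightarrow> cap X A / sum m A \<le> cap X F / sum m F"
    using capacity_ratio_minimizer[OF Y(1,2)] unfolding \<open>V - (V - X) = X\<close> by blast
  have AB: "A \<subseteq> V" "B \<subseteq> V" "A \<inter> B = {}"
    using A B X by auto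
  have "cap A B \<le> cap (V - X) B"
    using A B X by (intro capacity_mono) auto
  then have "cap A B / sum m B \<le> cap (V - X) B / sum m B"
    using sum_m_pos[OF AB(2) B(2)] by (simp add: divide_right_mono)
  also have "\<dots> \<le> 4 * lam X"
    using lambda_D_ge_capacity_ratio[OF X(1) B] by simp
  finally have bound_B: "cap A B / sum m B \<le> 4 * lam X" .
  have "cap A B = cap B A"
    using capacity_commute[OF AB] by simp
  also have "\<dots> \<le> cap X A"
    using A B X by (intro capacity_mono) auto
  finally have "cap A B / sum m A \<le> cap X A / sum m A"
    using sum_m_pos[OF AB(1) A(2)] by (simp add: divide_right_mono)
  also have "\<dots> \<le> 4 * lam (V - X)"
    using lambda_D_ge_capacity_ratio[OF Y(1) A(1,2)] A(3) unfolding \<open>V - (V - X) = X\<close> by force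
  finally have bound_A: "cap A B / sum m A \<le> 4 * lam (V - X)" .
  have "0 < cap A B" "0 < sum m A" "0 < sum m B" "0 < lam X" "0 < lam (V - X)"
    using AB A B X Y by (auto intro!: capacity_pos sum_m_pos lambda_D_pos)
  with bound_A bound_B have "logmean (cap A B / sum m A) (cap A B / sum m B)
      \<le> logmean (4 * lam (V - X)) (4 * lam X)"
    by (intro logmean_mono) auto
  also have "\<dots> = 4 * logmean (lam X) (lam (V - X))"
    using \<open>0 < lam X\<close> \<open>0 < lam (V - X)\<close> by (simp add: logmean_mult logmean_commute)
  finally show ?thesis
    using that A B AB by blast
qed

lemma spectral_logmean_le_capacity:
  assumes AB: "A \<subseteq> V" "B \<subseteq> V" "A \<noteq> {}" "B \<noteq> {}" "A \<inter> B = {}"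
  obtains X where "X \<subseteq> V" "X \<noteq> {}" "X \<noteq> V"
    "logmean (lam X) (lam (V - X)) \<le> 2 * logmean (cap A B / sum m A) (cap A B / sum m B)"
proof -
  obtain h where h: "equilibrium A B h"
    using equilibrium_exists AB by blast
  define X where "X = {x \<in> V. 1 / 2 < h x}"
  have "B \<subseteq> X" "A \<inter> X = {}"
    using h AB by (auto simp: X_def equilibrium_def admissible_def)
  then have X: "X \<subseteq> V" "X \<noteq> {}" "X \<noteq> V" and Y: "V - X \<subseteq> V" "V - X \<noteq> {}" "V - X \<noteq> V"
    using AB by (auto simp: X_def)
  have "lam X \<le> 2 * (cap A B / sum m B)"
    using lambda_D_le_capacity[OF h AB(2,4)] by (simp add: X_def)
  moreover have "lam (V - X) \<le> 2 * (cap B A / sum m A)"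
    using lambda_D_le_capacity[OF equilibrium_swap[OF h] AB(1,3), of "V - X"] by (force simp: X_def)
  moreover have "0 < cap A B" "0 < sum m A" "0 < sum m B" "0 < lam X" "0 < lam (V - X)"
    using AB X Y by (auto intro!: capacity_pos sum_m_pos lambda_D_pos)
  ultimately have "logmean (lam X) (lam (V - X)) \<le> logmean (2 * (cap A B / sum m B)) (2 * (cap A B / sum m A))"
    by (intro logmean_mono) (auto simp: capacity_commute[OF AB(1,2,5)])
  also have "\<dots> = 2 * logmean (cap A B / sum m B) (cap A B / sum m A)"
    using \<open>0 < cap A B\<close> \<open>0 < sum m A\<close> \<open>0 < sum m B\<close> by (intro logmean_mult) auto
  also have "\<dots> = 2 * logmean (cap A B / sum m A) (cap A B / sum m B)"
    by (simp only: logmean_commute)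
  finally show ?thesis
    using that X by blast
qed

lemma finite_capacity_logmeans:
  "finite {logmean (cap A B / sum m A) (cap A B / sum m B)
      | A B. A \<subseteq> V \<and> B \<subseteq> V \<and> A \<noteq> {} \<and> B \<noteq> {} \<and> A \<inter> B = {}}"
  by (rule finite_subset[OF _ finite_image_set2[of "\<lambda>A. A \<subseteq> V" "\<lambda>B. B \<subseteq> V"]])
    (auto simp: finite_V)

lemma finite_spectral_logmeans:
  "finite {logmean (lam X) (lam (V - X)) | X. X \<subseteq> V \<and> X \<noteq> {} \<and> X \<noteq> V}"
  by (rule finite_subset[OF _ finite_image_set[of "\<lambda>X. X \<subseteq> V"]]) (auto simp: finite_V)

lemma two_distinct_points:
  obtains x y where "x \<in> V" "y \<in> V" "x \<noteq> y"
proof -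
  have "\<not> card V \<le> Suc 0"
    using two_le_card_V by simp
  then show ?thesis
    using that card_le_Suc0_iff_eq[OF finite_V] by blast
qed

lemma alpha_cap_le_four_alpha_spectral: "alpha_cap V P m \<le> 4 * alpha_spectral V P m"
  unfolding alpha_cap_def alpha_spectral_def
proof (rule Inf_le_mult_Inf)
  let ?C = "{logmean (cap A B / sum m A) (cap A B / sum m B)
      | A B. A \<subseteq> V \<and> B \<subseteq> V \<and> A \<noteq> {} \<and> B \<noteq> {} \<and> A \<inter> B = {}}"
  let ?S = "{logmean (lam X) (lam (V - X)) | X. X \<subseteq> V \<and> X \<noteq> {} \<and> X \<noteq> V}"
  show "finite ?C"
    by (fact finite_capacity_logmeans)
  show "finite ?S"
    by (fact finite_spectral_logmeans)
  obtain x y where "x \<in> V" "y \<in> V" "x \<noteq> y"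
    by (rule two_distinct_points)
  then have "{x} \<subseteq> V" "{x} \<noteq> {}" "{x} \<noteq> V"
    by auto
  then have "logmean (lam {x}) (lam (V - {x})) \<in> ?S"
    by blast
  then show "?S \<noteq> {}"
    by blast
  fix t
  assume "t \<in> ?S"
  then obtain X where X: "X \<subseteq> V" "X \<noteq> {}" "X \<noteq> V" and t: "t = logmean (lam X) (lam (V - X))"
    by blast
  obtain A B where "A \<subseteq> V" "B \<subseteq> V" "A \<noteq> {}" "B \<noteq> {}" "A \<inter> B = {}"
    and le: "logmean (cap A B / sum m A) (cap A B / sum m B) \<le> 4 * logmean (lam X) (lam (V - X))"
    by (rule capacity_logmean_le_spectral[OF X])
  then have "logmean (cap A B / sum m A) (cap A B / sum m B) \<in> ?C"
    by blast
  with le t show "\<exists>s\<in>?C. s \<le> 4 * t"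
    by blast
qed

lemma alpha_spectral_le_two_alpha_cap: "alpha_spectral V P m \<le> 2 * alpha_cap V P m"
  unfolding alpha_cap_def alpha_spectral_def
proof (rule Inf_le_mult_Inf)
  let ?C = "{logmean (cap A B / sum m A) (cap A B / sum m B)
      | A B. A \<subseteq> V \<and> B \<subseteq> V \<and> A \<noteq> {} \<and> B \<noteq> {} \<and> A \<inter> B = {}}"
  let ?S = "{logmean (lam X) (lam (V - X)) | X. X \<subseteq> V \<and> X \<noteq> {} \<and> X \<noteq> V}"
  show "finite ?S"
    by (fact finite_spectral_logmeans)
  show "finite ?C"
    by (fact finite_capacity_logmeans)
  obtain x y where "x \<in> V" "y \<in> V" "x \<noteq> y"
    by (rule two_distinct_points)
  then have "{x} \<subseteq> V" "{y} \<subseteq> V" "{x} \<noteq> {}" "{y} \<noteq> {}" "{x} \<inter> {y} = {}"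
    by auto
  then have "logmean (cap {x} {y} / sum m {x}) (cap {x} {y} / sum m {y}) \<in> ?C"
    by blast
  then show "?C \<noteq> {}"
    by blast
  fix t
  assume "t \<in> ?C"
  then obtain A B where AB: "A \<subseteq> V" "B \<subseteq> V" "A \<noteq> {}" "B \<noteq> {}" "A \<inter> B = {}"
    and t: "t = logmean (cap A B / sum m A) (cap A B / sum m B)"
    by blast
  obtain X where "X \<subseteq> V" "X \<noteq> {}" "X \<noteq> V"
    and le: "logmean (lam X) (lam (V - X)) \<le> 2 * logmean (cap A B / sum m A) (cap A B / sum m B)"
    by (rule spectral_logmean_le_capacity[OF AB])
  then have "logmean (lam X) (lam (V - X)) \<in> ?S"
    by blast
  with le t show "\<exists>s\<in>?S. s \<le> 2 * t"
    by blast
qed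

end

theorem theorem3p3:
  fixes V :: "'a set" and P :: "'a \<Rightarrow> 'a \<Rightarrow> real" and m :: "'a \<Rightarrow> real"
  assumes "finite V"
    and "2 \<le> card V"
    and "\<And>x y. x \<in> V \<Longrightarrow> y \<in> V \<Longrightarrow> P x y \<ge> 0"
    and "\<And>x y. x \<in> V \<Longrightarrow> y \<in> V \<Longrightarrow> (P x y > 0 \<longleftrightarrow> P y x > 0)"
    and "\<And>x y. x \<in> V \<Longrightarrow> y \<in> V \<Longrightarrow>
           (x, y) \<in> {(u, v). u \<in> V \<and> v \<in> V \<and> P u v > 0}\<^sup>*"
    and "\<And>x. x \<in> V \<Longrightarrow> m x \<ge> 0"
    and "(\<Sum>x\<in>V. m x) = 1"
    and "\<And>x y. x \<in> V \<Longrightarrow> y \<in> V \<Longrightarrow> m x * P x y = m y * P y x"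
  shows "alpha_cap V P m / 4 \<le> alpha_spectral V P m
       \<and> alpha_spectral V P m \<le> 2 * alpha_cap V P m"
proof -
  interpret reversible_chain V P m
    using assms by unfold_locales
  show ?thesis
    using alpha_cap_le_four_alpha_spectral alpha_spectral_le_two_alpha_cap by simp
qed

end
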